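(* Let $P_{00},P_{01},P_{10},P_{11}$ be strictly positive random variables on a probability space, and set $P_0=P_{00}+P_{01}$, $P_1=P_{10}+P_{11}$, $$\Lambda_1=\ln\frac{P_0}{P_1},\qquad \Lambda_2=\ln\frac{P_{00}}{P_{01}},\qquad \alpha=\frac{\min\{P_{10},P_{11}\}}{P_1}.$$ Let $\mathcal C$ be the event that $P_{00}$ is at least the second largest element of the multiset $\{P_{00},P_{01},P_{10},P_{11}\}$. Then $$\Pr(\mathcal C)\ \le\ \Pr(\Lambda_1\ge 0,\ \Lambda_2\ge 0)\ +\ \Pr\!\big(\Lambda_1\ge 0,\ -\ln(2e^{\Lambda_1}-1)\le \Lambda_2<0\big)\ +\ \Pr(\ln\alpha\le \Lambda_1<0).$$
   Context: This is the list-size-$L=2$ case of the analysis of SCL decoding of polar codes. There, for an information-bit index $k$, $P_{v_{k-1}v_k}=P(v_{k-1}\mid \mathbf y,\mathbf 0_1^{k-2})\,P(v_k\mid \mathbf y,\mathbf 0_1^{k-2},v_{k-1})$ is the posterior path metric of the extension $(v_{k-1},v_k)$ of the all-zero prefix, $\Lambda_1=\mathsf L_{k-1}$ and $\Lambda_2=\mathsf L_k$ are the log-likelihood ratios of information bits $k-1$ and $k$ given that all previous information bits are $0$, and $\mathcal C=\mathcal C_k$ is the event that the correct all-zero path survives in the list of size $2$ at step $k$ given that the list at step $k-1$ consists of the two extensions of the all-zero prefix. Note $2e^{\Lambda_1}-1\ge 1$ on $\{\Lambda_1\ge0\}$, so the logarithm is well defined there. *)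

theory Defs
  imports "HOL-Probability.Probability"
begin

definition second_largest4 :: "real \<Rightarrow> real \<Rightarrow> real \<Rightarrow> real \<Rightarrow> real" where
  "second_largest4 a b c d = rev (sorted_list_of_multiset {#a, b, c, d#}) ! 1"

end

theory Submission
  imports Defs
begin

text \<open>If P00 is at least the second largest of the four metrics, then at most one of P01, P10,
  P11 exceeds it. Split on the sign of \<Lambda>1 and \<Lambda>2. If \<Lambda>1 < 0, then P00 dominates
  min(P10,P11), which is the third region. If \<Lambda>1 \<ge> 0 but \<Lambda>2 < 0, then P01 is the
  competitor exceeding P00, so P10, P11 \<le> P00 and hence P10 + P11 \<le> 2 P00; this gives
  2 e^\<Lambda>1 - 1 \<ge> P01/P00 = e^-\<Lambda>2, which is the second region.\<close>

lemma second_largest4_eq_sort: "second_largest4 a b c d = sort [a, b, c, d] ! 2"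
proof -
  have "{#a, b, c, d#} = mset [a, b, c, d]" by simp
  then show ?thesis unfolding second_largest4_def
    by (simp only: sorted_list_of_multiset_mset) (simp add: rev_nth)
qed

lemma ge_second_largest4_imp:
  fixes a b c d :: real
  assumes "a \<ge> second_largest4 a b c d"
  shows ge_second_largest4_max: "a < b \<Longrightarrow> max c d \<le> a"
    and ge_second_largest4_min: "min c d \<le> a"
  using assms unfolding second_largest4_eq_sort by (auto split: if_splits)

lemma ln_ratio_le_ln_twice_ratio_minus_one:
  fixes a b s :: real
  assumes "a > 0" "b > 0" "s > 0" "s \<le> 2 * a"
  shows "- ln (2 * ((a + b) / s) - 1) \<le> ln (a / b)"
proof -
  have "b / a \<le> 2 * ((a + b) / s) - 1"
  proof -
    have "(a + b) * s \<le> (a + b) * (2 * a)"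
      using assms by (intro mult_left_mono) auto
    then show ?thesis using assms by (simp add: field_simps)
  qed
  then have "ln (b / a) \<le> ln (2 * ((a + b) / s) - 1)"
    using assms by (subst ln_le_cancel_iff) auto
  moreover have "ln (b / a) = - ln (a / b)"
    using assms by (simp add: ln_div)
  ultimately show ?thesis by linarith
qed

lemma ge_second_largest4_regions:
  fixes a b c d :: real
  assumes pos: "a > 0" "b > 0" "c > 0" "d > 0" and a_ge: "a \<ge> second_largest4 a b c d"
  defines "l1 \<equiv> ln ((a + b) / (c + d))" and "l2 \<equiv> ln (a / b)"
  shows "(l1 \<ge> 0 \<and> l2 \<ge> 0)
    \<or> (l1 \<ge> 0 \<and> - ln (2 * exp l1 - 1) \<le> l2 \<and> l2 < 0)
    \<or> (ln (min c d / (c + d)) \<le> l1 \<and> l1 < 0)"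
proof (cases "c + d \<le> a + b")
  case True
  then have "l1 \<ge> 0" unfolding l1_def using pos by (simp add: field_simps)
  moreover have "l2 \<ge> 0 \<or> (- ln (2 * exp l1 - 1) \<le> l2 \<and> l2 < 0)"
  proof (cases "b \<le> a")
    case True
    then show ?thesis unfolding l2_def using pos by (simp add: field_simps)
  next
    case False
    then have "c + d \<le> 2 * a" using ge_second_largest4_max[OF a_ge] by simp
    moreover have "exp l1 = (a + b) / (c + d)" unfolding l1_def using pos by simp
    ultimately have "- ln (2 * exp l1 - 1) \<le> l2"
      unfolding l2_def using pos by (metis ln_ratio_le_ln_twice_ratio_minus_one add_pos_pos)
    moreover have "l2 < 0" unfolding l2_def using pos False by (simp add: field_simps)
    ultimately show ?thesis by simp
  qed
  ultimately show ?thesis by blast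
next
  case False
  then have "l1 < 0" unfolding l1_def using pos by (simp add: field_simps)
  moreover have "min c d / (c + d) \<le> (a + b) / (c + d)"
    using ge_second_largest4_min[OF a_ge] pos by (intro divide_right_mono) auto
  then have "ln (min c d / (c + d)) \<le> l1" unfolding l1_def using pos by simp
  ultimately show ?thesis by simp
qed

lemma (in finite_measure) measure_le_sum_of_cover3:
  assumes "C \<subseteq> A \<union> B \<union> D" "A \<in> sets M" "B \<in> sets M" "D \<in> sets M"
  shows "measure M C \<le> measure M A + measure M B + measure M D"
proof -
  have "measure M C \<le> measure M (A \<union> B \<union> D)"
    using assms by (intro finite_measure_mono) auto
  also have "\<dots> \<le> measure M (A \<union> B) + measure M D"
    using assms by (intro measure_subadditive) auto
  also have "\<dots> \<le> measure M A + measure M B + measure M D"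
    using assms by (simp add: measure_subadditive)
  finally show ?thesis .
qed

theorem proposition2:
  fixes M :: "'a measure" and P00 P01 P10 P11 :: "'a \<Rightarrow> real"
  assumes "prob_space M"
    and "P00 \<in> borel_measurable M" and "P01 \<in> borel_measurable M"
    and "P10 \<in> borel_measurable M" and "P11 \<in> borel_measurable M"
    and "\<forall>x\<in>space M. P00 x > 0 \<and> P01 x > 0 \<and> P10 x > 0 \<and> P11 x > 0"
  defines "\<Lambda>1 \<equiv> \<lambda>x. ln ((P00 x + P01 x) / (P10 x + P11 x))"
    and "\<Lambda>2 \<equiv> \<lambda>x. ln (P00 x / P01 x)"
    and "\<alpha> \<equiv> \<lambda>x. min (P10 x) (P11 x) / (P10 x + P11 x)"
    and "C \<equiv> {x \<in> space M. P00 x \<ge> second_largest4 (P00 x) (P01 x) (P10 x) (P11 x)}"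
  shows "measure M C
      \<le> measure M {x \<in> space M. \<Lambda>1 x \<ge> 0 \<and> \<Lambda>2 x \<ge> 0}
       + measure M {x \<in> space M. \<Lambda>1 x \<ge> 0 \<and> - ln (2 * exp (\<Lambda>1 x) - 1) \<le> \<Lambda>2 x \<and> \<Lambda>2 x < 0}
       + measure M {x \<in> space M. ln (\<alpha> x) \<le> \<Lambda>1 x \<and> \<Lambda>1 x < 0}"
proof -
  interpret prob_space M by fact
  have [measurable]: "\<Lambda>1 \<in> borel_measurable M" "\<Lambda>2 \<in> borel_measurable M" "\<alpha> \<in> borel_measurable M"
    unfolding \<Lambda>1_def \<Lambda>2_def \<alpha>_def using assms(2-5) by measurable
  have "C \<subseteq> {x \<in> space M. \<Lambda>1 x \<ge> 0 \<and> \<Lambda>2 x \<ge> 0}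
      \<union> {x \<in> space M. \<Lambda>1 x \<ge> 0 \<and> - ln (2 * exp (\<Lambda>1 x) - 1) \<le> \<Lambda>2 x \<and> \<Lambda>2 x < 0}
      \<union> {x \<in> space M. ln (\<alpha> x) \<le> \<Lambda>1 x \<and> \<Lambda>1 x < 0}"
    using ge_second_largest4_regions assms(6)
    unfolding C_def \<Lambda>1_def \<Lambda>2_def \<alpha>_def by blast
  then show ?thesis by (rule measure_le_sum_of_cover3) measurable
qed

end
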